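(* Let $\mathbb{O}$ be the real octonion algebra and let $f(x)\in\mathbb{O}[x]$ be a polynomial of degree $2$. Then every root in $\mathbb{O}$ of $f'(x)$ lies in the convex hull (in the real vector space $\mathbb{O}$) of the set of roots in $\mathbb{O}$ of the companion polynomial $C_f(x)$.
   Context: $\mathbb{O}=(-1,-1,-1)_{\mathbb{R}}$ is the real Cayley--Dickson algebra obtained from $\mathbb{R}$ by three doublings $B\{\gamma\}=B\times B$, $(a,b)(c,d)=(ac+\gamma\bar d b,\ da+b\bar c)$, $\overline{(a,b)}=(\bar a,-b)$, with $\gamma=-1$ each time. $\mathbb{O}[x]=\mathbb{O}\otimes_{\mathbb{R}}\mathbb{R}[x]$ with central $x$; $f(x)=a_2x^2+a_1x+a_0$, $a_k\in\mathbb{O}$; substitution $f(r)=\sum_k a_k(r^k)$; $\overline{f(x)}=\sum_k\bar a_kx^k$; companion polynomial $C_f(x)=\overline{f(x)}\cdot f(x)\in\mathbb{R}[x]$. Formal derivative $f'(x)=2a_2x+a_1$. *)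

theory Defs
  imports "HOL-Analysis.Analysis"
begin

text \<open>Cayley--Dickson doubling B{gamma} = B x B with gamma = -1:
  (a,b)(c,d) = (ac + gamma * conj(d) b, d a + b conj(c)),  conj(a,b) = (conj a, -b).\<close>

definition cd_mult :: "('a::ab_group_add \<Rightarrow> 'a \<Rightarrow> 'a) \<Rightarrow> ('a \<Rightarrow> 'a) \<Rightarrow> 'a \<times> 'a \<Rightarrow> 'a \<times> 'a \<Rightarrow> 'a \<times> 'a"
  where "cd_mult m cj x y = (case x of (a, b) \<Rightarrow> case y of (c, d) \<Rightarrow>
           (m a c - m (cj d) b, m d a + m b (cj c)))"

definition cd_cnj :: "('a::ab_group_add \<Rightarrow> 'a) \<Rightarrow> 'a \<times> 'a \<Rightarrow> 'a \<times> 'a"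
  where "cd_cnj cj x = (case x of (a, b) \<Rightarrow> (cj a, - b))"

type_synonym cplx2 = "real \<times> real"
type_synonym quat2 = "cplx2 \<times> cplx2"
type_synonym octonion = "quat2 \<times> quat2"

definition mult1 :: "cplx2 \<Rightarrow> cplx2 \<Rightarrow> cplx2" where "mult1 = cd_mult (*) id"
definition cnj1 :: "cplx2 \<Rightarrow> cplx2" where "cnj1 = cd_cnj id"
definition mult2 :: "quat2 \<Rightarrow> quat2 \<Rightarrow> quat2" where "mult2 = cd_mult mult1 cnj1"
definition cnj2 :: "quat2 \<Rightarrow> quat2" where "cnj2 = cd_cnj cnj1"

text \<open>The real octonion algebra (-1,-1,-1)_R; its real vector space structure is the
  componentwise one on the product type (real^8).\<close>
definition omult :: "octonion \<Rightarrow> octonion \<Rightarrow> octonion" where "omult = cd_mult mult2 cnj2"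
definition ocnj :: "octonion \<Rightarrow> octonion" where "ocnj = cd_cnj cnj2"

definition oone :: octonion where "oone = (((1, 0), (0, 0)), ((0, 0), (0, 0)))"

primrec opow :: "octonion \<Rightarrow> nat \<Rightarrow> octonion" where
  "opow r 0 = oone"
| "opow r (Suc n) = omult r (opow r n)"

text \<open>Polynomials in O[x] (central x) as coefficient lists [a_0, a_1, ...];
  substitution f(r) = sum_k a_k (r^k).\<close>
definition opoly_eval :: "octonion list \<Rightarrow> octonion \<Rightarrow> octonion" where
  "opoly_eval cs r = (\<Sum>k<length cs. omult (cs ! k) (opow r k))"

definition opoly_conj :: "octonion list \<Rightarrow> octonion list" where
  "opoly_conj cs = map ocnj cs"

definition opoly_mult :: "octonion list \<Rightarrow> octonion list \<Rightarrow> octonion list" where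
  "opoly_mult p q = (if p = [] \<or> q = [] then [] else
     map (\<lambda>k. \<Sum>i\<le>k. if i < length p \<and> k - i < length q then omult (p ! i) (q ! (k - i)) else 0)
         [0..<length p + length q - 1])"

definition companion :: "octonion list \<Rightarrow> octonion list" where
  "companion f = opoly_mult (opoly_conj f) f"

definition opoly_deriv :: "octonion list \<Rightarrow> octonion list" where
  "opoly_deriv cs = map (\<lambda>k. scaleR (real (Suc k)) (cs ! Suc k)) [0..<length cs - 1]"

end

theory Submission
  imports Defs "HOL-Library.Quadratic_Discriminant" "HOL-Real_Asymp.Real_Asymp"
begin

text \<open>If \<open>f'(z) = 0\<close> then \<open>a\<^sub>1 = -2 a\<^sub>2 z\<close>; writing \<open>a\<^sub>0 = a\<^sub>2 c\<close>
  gives \<open>f = a\<^sub>2 g\<close> with \<open>g(x) = x\<^sup>2 - 2 z x + c\<close>, and multiplicativity of the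
  octonion norm gives \<open>C\<^sub>f = |a\<^sub>2|\<^sup>2 C\<^sub>g\<close>. With \<open>m = Re z\<close>, \<open>v = Im z\<close> and
  \<open>s = x - m\<close>, the real quartic \<open>C\<^sub>g\<close> is \<open>(s\<^sup>2 + A)\<^sup>2 + |w - 2 s v|\<^sup>2\<close> for a
  real \<open>A\<close> and an imaginary \<open>w\<close>. Being nonnegative without cubic term, it factors
  over the reals as \<open>((s - \<alpha>)\<^sup>2 + \<beta>\<^sup>2) ((s + \<alpha>)\<^sup>2 + \<gamma>\<^sup>2)\<close> with
  \<open>\<beta>, \<gamma> \<ge> 0\<close>, and comparing coefficients under the Cauchy--Schwarz inequality
  \<open>\<langle>w, v\<rangle>\<^sup>2 \<le> |w|\<^sup>2 |v|\<^sup>2\<close> gives \<open>2 |v| \<le> \<beta> + \<gamma>\<close>.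
  A complex root \<open>p + q i\<close> of a real polynomial yields the octonion roots \<open>p + q u\<close>
  for every unit imaginary \<open>u\<close>, so \<open>C\<^sub>g\<close> vanishes at \<open>m + \<alpha> \<plusminus> \<beta> u\<close> and
  \<open>m - \<alpha> \<plusminus> \<gamma> u\<close>. For \<open>u = v / |v|\<close>, the point \<open>z = m + |v| u\<close> is the
  midpoint of a point of the segment \<open>m + \<alpha> + [-\<beta>, \<beta>] u\<close> and a point of
  \<open>m - \<alpha> + [-\<gamma>, \<gamma>] u\<close>.\<close>

section \<open>Octonion arithmetic\<close>

lemma octonion_coords:
  obtains x0 x1 x2 x3 x4 x5 x6 x7 :: real
  where "x = (((x0, x1), (x2, x3)), ((x4, x5), (x6, x7)))"
  by (metis prod.exhaust)

lemmas octonion_defs = omult_def mult2_def mult1_def cnj1_def cnj2_def cd_mult_def cd_cnj_def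
  ocnj_def oone_def

lemma omult_oone_right [simp]: "omult x oone = x"
  by (cases x rule: octonion_coords) (simp add: octonion_defs)

lemma omult_oone_left [simp]: "omult oone x = x"
  by (cases x rule: octonion_coords) (simp add: octonion_defs)

lemma omult_add_left: "omult (x + y) z = omult x z + omult y z"
  by (cases x rule: octonion_coords, cases y rule: octonion_coords, cases z rule: octonion_coords)
    (simp add: octonion_defs algebra_simps)

lemma omult_add_right: "omult x (y + z) = omult x y + omult x z"
  by (cases x rule: octonion_coords, cases y rule: octonion_coords, cases z rule: octonion_coords)
    (simp add: octonion_defs algebra_simps)

lemma omult_scaleR_left: "omult (r *\<^sub>R x) y = r *\<^sub>R omult x y"
  by (cases x rule: octonion_coords, cases y rule: octonion_coords)
    (simp add: octonion_defs algebra_simps)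

lemma omult_scaleR_right: "omult x (r *\<^sub>R y) = r *\<^sub>R omult x y"
  by (cases x rule: octonion_coords, cases y rule: octonion_coords)
    (simp add: octonion_defs algebra_simps)

lemma inner_oone_oone [simp]: "inner oone oone = 1"
  by (simp add: oone_def inner_prod_def)

lemma ocnj_eq: "ocnj x = (2 * inner x oone) *\<^sub>R oone - x"
  by (cases x rule: octonion_coords) (simp add: octonion_defs inner_prod_def)

lemma omult_ocnj_add_omult_ocnj: "omult (ocnj x) y + omult (ocnj y) x = (2 * inner x y) *\<^sub>R oone"
  by (cases x rule: octonion_coords, cases y rule: octonion_coords)
    (simp add: octonion_defs inner_prod_def algebra_simps)

lemma omult_omult_ocnj: "omult a (omult (ocnj a) y) = inner a a *\<^sub>R y"
  by (cases a rule: octonion_coords, cases y rule: octonion_coords)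
    (simp add: octonion_defs inner_prod_def algebra_simps power2_eq_square)

lemma inner_omult_left: "inner (omult a x) (omult a y) = inner a a * inner x y"
  by (cases a rule: octonion_coords, cases x rule: octonion_coords, cases y rule: octonion_coords)
    (simp add: octonion_defs inner_prod_def algebra_simps)

lemma omult_ocnj_self: "omult (ocnj x) x = inner x x *\<^sub>R oone"
  by (cases x rule: octonion_coords)
    (simp add: octonion_defs inner_prod_def power2_eq_square zero_prod_def)

section \<open>Complex subalgebras\<close>

definition imag_unit :: "octonion \<Rightarrow> bool"
  where "imag_unit u \<longleftrightarrow> inner u oone = 0 \<and> inner u u = 1"

lemma imag_unit_uminus: "imag_unit u \<Longrightarrow> imag_unit (- u)"
  by (simp add: imag_unit_def)

lemma omult_imag_unit_self: "imag_unit u \<Longrightarrow> omult u u = - oone"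
  using omult_ocnj_self[of u] omult_scaleR_left[of "-1" u u]
  by (simp add: imag_unit_def ocnj_eq) (metis minus_minus)

definition complex_embed :: "octonion \<Rightarrow> complex \<Rightarrow> octonion"
  where "complex_embed u z = Re z *\<^sub>R oone + Im z *\<^sub>R u"

lemma linear_complex_embed: "linear (complex_embed u)"
  by (rule linearI) (simp_all add: complex_embed_def algebra_simps)

lemma complex_embed_mult:
  assumes "imag_unit u"
  shows "omult (complex_embed u a) (complex_embed u b) = complex_embed u (a * b)"
  by (simp add: complex_embed_def omult_add_left omult_add_right omult_scaleR_left
      omult_scaleR_right omult_imag_unit_self[OF assms] algebra_simps)

lemma complex_embed_1 [simp]: "complex_embed u 1 = oone"
  by (simp add: complex_embed_def)

lemma opow_complex_embed:
  assumes "imag_unit u"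
  shows "opow (complex_embed u a) k = complex_embed u (a ^ k)"
  by (induction k) (simp_all add: complex_embed_mult[OF assms])

lemma opoly_eval_real_coeffs:
  assumes "imag_unit u"
  shows "opoly_eval (map (\<lambda>t. t *\<^sub>R oone) cs) (complex_embed u z)
    = complex_embed u (\<Sum>k<length cs. of_real (cs ! k) * z ^ k)"
  by (simp add: opoly_eval_def omult_scaleR_left opow_complex_embed[OF assms]
      linear_sum[OF linear_complex_embed] linear_scale[OF linear_complex_embed]
      flip: scaleR_conv_of_real)

section \<open>Companion polynomials of quadratics\<close>

lemma opoly_eval_scaleR: "opoly_eval (map (scaleR t) cs) r = t *\<^sub>R opoly_eval cs r"
  by (simp add: opoly_eval_def omult_scaleR_left scaleR_sum_right)

lemma opoly_eval_deriv_quadratic: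
  "opoly_eval (opoly_deriv [a0, a1, a2]) z = a1 + 2 *\<^sub>R omult a2 z"
  by (simp add: opoly_deriv_def opoly_eval_def numeral_2_eq_2 lessThan_Suc omult_scaleR_left)

lemma companion_quadratic:
  "companion [a0, a1, a2] = map (\<lambda>t. t *\<^sub>R oone)
     [inner a0 a0, 2 * inner a0 a1, inner a1 a1 + 2 * inner a0 a2, 2 * inner a1 a2, inner a2 a2]"
proof -
  have "omult (ocnj a0) a2 + omult (ocnj a1) a1 + omult (ocnj a2) a0
      = (inner a1 a1 + 2 * inner a0 a2) *\<^sub>R oone"
    using omult_ocnj_add_omult_ocnj[of a0 a2] omult_ocnj_self[of a1]
    by (simp add: algebra_simps scaleR_add_left)
  then show ?thesis
    by (simp add: companion_def opoly_mult_def opoly_conj_def upt_rec numeral_eq_Suc atMost_Suc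
        omult_ocnj_add_omult_ocnj omult_ocnj_self algebra_simps)
qed

lemma companion_omult_left:
  "companion [omult a b0, omult a b1, omult a b2] = map (scaleR (inner a a)) (companion [b0, b1, b2])"
  by (simp add: companion_quadratic inner_omult_left algebra_simps)

lemma omult_left_inverse:
  assumes "a \<noteq> 0"
  shows "omult a ((1 / inner a a) *\<^sub>R omult (ocnj a) b) = b"
  using assms by (simp add: omult_scaleR_right omult_omult_ocnj)

section \<open>Real quartics\<close>

text \<open>Ferrari's resolvent: \<open>y = a\<^sup>2\<close> in the factorization of \<open>depressed_quartic_factors\<close>.\<close>

lemma resolvent_cubic_pos_root:
  fixes P R T :: real
  assumes "R \<noteq> 0"
  obtains y where "0 < y" "y * (P + y)^2 - 4 * T * y = R^2"
proof -
  define h where "h y = y * (P + y)^2 - 4 * T * y - R^2" for y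
  have "filterlim h at_top at_top"
    unfolding h_def by real_asymp
  then obtain Y where "0 \<le> Y" "0 \<le> h Y"
    by (metis eventually_at_top_linorder filterlim_at_top nle_le)
  moreover have "h 0 \<le> 0" and "continuous_on {0..Y} h"
    by (simp_all add: h_def continuous_intros)
  ultimately obtain y where "0 \<le> y" "h y = 0"
    using IVT'[of h 0 0 Y] by auto
  moreover from assms have "h 0 \<noteq> 0"
    by (simp add: h_def)
  ultimately show ?thesis
    using that[of y] by (fastforce simp: h_def)
qed

lemma biquadratic_factors:
  fixes P T :: real
  assumes "0 \<le> T"
  obtains a b d where "b + d - a^2 = P" "a * (d - b) = 0" "b * d = T"
proof (cases "4 * T \<le> P^2")
  case True
  define q where "q = sqrt (P^2 - 4 * T)"
  have "q^2 = P^2 - 4 * T"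
    using True by (simp add: q_def)
  show ?thesis
  proof (rule that)
    show "(P - q) / 2 + (P + q) / 2 - 0^2 = P" and "0 * ((P + q) / 2 - (P - q) / 2) = 0"
      by (simp_all add: field_simps)
    show "(P - q) / 2 * ((P + q) / 2) = T"
      using \<open>q^2 = P^2 - 4 * T\<close> by (simp add: power2_eq_square algebra_simps)
  qed
next
  case False
  then have "P^2 < (2 * sqrt T)^2"
    using assms by (simp add: power_mult_distrib)
  then have "P \<le> 2 * sqrt T"
    using assms by (smt (verit) power2_less_imp_less real_sqrt_ge_zero)
  then have "(sqrt (2 * sqrt T - P))^2 = 2 * sqrt T - P"
    by simp
  show ?thesis
  proof (rule that)
    show "sqrt T + sqrt T - (sqrt (2 * sqrt T - P))^2 = P"
      using \<open>(sqrt (2 * sqrt T - P))^2 = 2 * sqrt T - P\<close> by simp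
    show "sqrt (2 * sqrt T - P) * (sqrt T - sqrt T) = 0" and "sqrt T * sqrt T = T"
      using assms by simp_all
  qed
qed

text \<open>Coefficient form of \<open>s\<^sup>4 + P s\<^sup>2 + R s + T = (s\<^sup>2 + a s + b) (s\<^sup>2 - a s + d)\<close>.\<close>

lemma depressed_quartic_factors:
  fixes P R T :: real
  assumes "0 \<le> T"
  obtains a b d where "b + d - a^2 = P" "a * (d - b) = R" "b * d = T"
proof (cases "R = 0")
  case True
  with assms that show ?thesis
    by (metis biquadratic_factors)
next
  case False
  then obtain y where y: "0 < y" "y * (P + y)^2 - 4 * T * y = R^2"
    using resolvent_cubic_pos_root by blast
  define a where "a = sqrt y"
  define r where "r = R / a"
  have a: "0 < a" "a^2 = y"
    using y(1) by (simp_all add: a_def)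
  have "(P + y - r) / 2 * ((P + y + r) / 2) = ((P + y)^2 - r^2) / 4"
    by (simp add: power2_eq_square field_simps)
  also have "\<dots> = ((P + y)^2 - R^2 / y) / 4"
    by (simp add: r_def power_divide a)
  also have "\<dots> = T"
    using y by (simp add: field_simps power2_eq_square)
  finally have "(P + y - r) / 2 * ((P + y + r) / 2) = T" .
  moreover have "(P + y - r) / 2 + (P + y + r) / 2 - a^2 = P"
    using a by (simp add: field_simps)
  moreover have "a * ((P + y + r) / 2 - (P + y - r) / 2) = R"
    using a by (simp add: r_def field_simps)
  ultimately show ?thesis
    using that by blast
qed

lemma monic_quadratic_no_root_discrim_neg:
  fixes a b :: real
  assumes "\<And>s. s^2 + a * s + b \<noteq> 0"
  shows "a^2 < 4 * b"
  using discriminant_nonneg_ex[of 1 a b] assms by (force simp: discrim_def)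

text \<open>Coefficient form of
  \<open>(s\<^sup>2 + A)\<^sup>2 + W - 4 K s + 4 V s\<^sup>2 = ((s - \<alpha>)\<^sup>2 + \<beta>\<^sup>2) ((s + \<alpha>)\<^sup>2 + \<gamma>\<^sup>2)\<close>,
  see \<open>quartic_two_quadratics_product\<close>.\<close>

definition quartic_splits :: "real \<Rightarrow> real \<Rightarrow> real \<Rightarrow> real \<Rightarrow> real \<Rightarrow> real \<Rightarrow> real \<Rightarrow> bool"
  where "quartic_splits A V K W \<alpha> \<beta> \<gamma> \<longleftrightarrow> 0 \<le> \<beta> \<and> 0 \<le> \<gamma> \<and>
    \<beta>^2 + \<gamma>^2 - 2 * \<alpha>^2 = 2 * A + 4 * V \<and> \<alpha> * (\<beta>^2 - \<gamma>^2) = - 2 * K \<and>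
    (\<alpha>^2 + \<beta>^2) * (\<alpha>^2 + \<gamma>^2) = A^2 + W"

lemma quartic_splits_at_real_root:
  fixes A V K W s :: real
  assumes V: "0 \<le> V" and CS: "K^2 \<le> W * V"
    and A: "A = - (s^2)" and W: "W = 4 * K * s - 4 * V * s^2"
  shows "quartic_splits A V K W s 0 (2 * sqrt V)"
proof -
  have "(K - 2 * s * V)^2 = K^2 - W * V"
    by (simp add: W power2_eq_square algebra_simps)
  with CS have "(K - 2 * s * V)^2 \<le> 0"
    by simp
  then have K: "K = 2 * s * V"
    by simp
  have G: "(2 * sqrt V)^2 = 4 * V"
    using V by (simp add: power_mult_distrib)
  show ?thesis
    unfolding quartic_splits_def
  proof (intro conjI)
    show "0^2 + (2 * sqrt V)^2 - 2 * s^2 = 2 * A + 4 * V"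
      using G A by simp
    show "s * (0^2 - (2 * sqrt V)^2) = - 2 * K"
      using G K by simp
    show "(s^2 + 0^2) * (s^2 + (2 * sqrt V)^2) = A^2 + W"
      using G A W K by (simp add: power2_eq_square algebra_simps)
  qed (simp_all add: V)
qed

lemma quartic_splits_of_quadratic_factors:
  fixes a b d :: real
  assumes abd: "b + d - a^2 = 2 * A + 4 * V" "a * (d - b) = - 4 * K" "b * d = A^2 + W"
    and "a^2 < 4 * b" "a^2 < 4 * d"
  obtains \<alpha> \<beta> \<gamma> where "quartic_splits A V K W \<alpha> \<beta> \<gamma>"
proof -
  define \<alpha> where "\<alpha> = - a / 2"
  have \<alpha>: "4 * \<alpha>^2 = a^2"
    by (simp add: \<alpha>_def power_divide)
  define \<beta> where "\<beta> = sqrt (b - \<alpha>^2)"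
  define \<gamma> where "\<gamma> = sqrt (d - \<alpha>^2)"
  have "\<alpha>^2 < b" "\<alpha>^2 < d"
    using \<alpha> assms(4,5) by linarith+
  then have \<beta>: "\<alpha>^2 + \<beta>^2 = b" and \<gamma>: "\<alpha>^2 + \<gamma>^2 = d" and "0 \<le> \<beta>" "0 \<le> \<gamma>"
    by (simp_all add: \<beta>_def \<gamma>_def)
  have "\<beta>^2 - \<gamma>^2 = b - d"
    using \<beta> \<gamma> by linarith
  moreover have "\<alpha> * (b - d) = - 2 * K"
    using abd(2) by (simp add: \<alpha>_def field_simps)
  ultimately have "\<alpha> * (\<beta>^2 - \<gamma>^2) = - 2 * K"
    by simp
  moreover have "\<beta>^2 + \<gamma>^2 - 2 * \<alpha>^2 = 2 * A + 4 * V"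
    using \<alpha> \<beta> \<gamma> abd(1) by linarith
  moreover have "(\<alpha>^2 + \<beta>^2) * (\<alpha>^2 + \<gamma>^2) = A^2 + W"
    using \<beta> \<gamma> abd(3) by simp
  ultimately show ?thesis
    using that \<open>0 \<le> \<beta>\<close> \<open>0 \<le> \<gamma>\<close> by (auto simp: quartic_splits_def)
qed

lemma quadratic_nonneg_of_Cauchy_Schwarz:
  fixes V K W s :: real
  assumes V: "0 \<le> V" and W: "0 \<le> W" and CS: "K^2 \<le> W * V"
  shows "0 \<le> W - 4 * K * s + 4 * V * s^2"
proof (cases "V = 0")
  case True
  then show ?thesis
    using CS W by simp
next
  case False
  have "4 * V * (W - 4 * K * s + 4 * V * s^2) = (4 * V * s - 2 * K)^2 + 4 * (W * V - K^2)"
    by (simp add: power2_eq_square algebra_simps)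
  also have "\<dots> \<ge> 0"
    using CS by simp
  finally show ?thesis
    using V False by (simp add: zero_le_mult_iff)
qed

lemma nonneg_quartic_splits:
  fixes A V K W :: real
  assumes V: "0 \<le> V" and W: "0 \<le> W" and CS: "K^2 \<le> W * V"
  obtains \<alpha> \<beta> \<gamma> where "quartic_splits A V K W \<alpha> \<beta> \<gamma>"
proof -
  define p where "p s = s^4 + (2 * A + 4 * V) * s^2 - 4 * K * s + (A^2 + W)" for s :: real
  have p_sum: "p s = (s^2 + A)^2 + (W - 4 * K * s + 4 * V * s^2)" for s
    by (simp add: p_def power2_eq_square power4_eq_xxxx algebra_simps)
  show ?thesis
  proof (cases "\<exists>s. p s = 0")
    case True
    then obtain s where "p s = 0" ..
    then have "(s^2 + A)^2 = 0" and "W - 4 * K * s + 4 * V * s^2 = 0"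
      using p_sum[of s] quadratic_nonneg_of_Cauchy_Schwarz[OF V W CS, of s]
        zero_le_power2[of "s^2 + A"]
      by linarith+
    then have "quartic_splits A V K W s 0 (2 * sqrt V)"
      by (intro quartic_splits_at_real_root[OF V CS]) simp_all
    then show ?thesis
      by (rule that)
  next
    case False
    have "0 \<le> A^2 + W"
      using W by simp
    then obtain a b d
      where abd: "b + d - a^2 = 2 * A + 4 * V" "a * (d - b) = - 4 * K" "b * d = A^2 + W"
      by (rule depressed_quartic_factors)
    have "(s^2 + a * s + b) * (s^2 + (- a) * s + d)
        = s^4 + (b + d - a^2) * s^2 + a * (d - b) * s + b * d" for s :: real
      by (simp add: power2_eq_square power4_eq_xxxx algebra_simps)
    then have "p s = (s^2 + a * s + b) * (s^2 + (- a) * s + d)" for s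
      by (simp add: p_def abd)
    with False have "a^2 < 4 * b" and "a^2 < 4 * d"
      using monic_quadratic_no_root_discrim_neg[of a b] monic_quadratic_no_root_discrim_neg[of "- a" d]
      by auto
    with abd show ?thesis
      using that by (rule quartic_splits_of_quadratic_factors)
  qed
qed

lemma shifted_product_less:
  fixes D M P S :: real
  assumes "0 < D" "0 \<le> M" "0 \<le> S" "P \<le> M * S"
  shows "(P - 2 * D * M - D^2) * (S + 2 * D) < P * S"
proof -
  have "2 * D * P \<le> 2 * D * (M * S)"
    using assms by simp
  moreover have "0 < D^2 * (4 * M + S + 2 * D)"
    using assms by (simp add: add_nonneg_pos)
  ultimately show ?thesis
    by (simp add: power2_eq_square algebra_simps)
qed

lemma quartic_splits_radii_bound:
  fixes A V K W \<alpha> \<beta> \<gamma> :: real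
  assumes "quartic_splits A V K W \<alpha> \<beta> \<gamma>" and CS: "K^2 \<le> W * V"
  shows "4 * V \<le> (\<beta> + \<gamma>)^2"
proof (rule ccontr)
  have "0 \<le> \<beta>" "0 \<le> \<gamma>"
    and E1: "\<beta>^2 + \<gamma>^2 - 2 * \<alpha>^2 = 2 * A + 4 * V" and E2: "\<alpha> * (\<beta>^2 - \<gamma>^2) = - 2 * K"
    and E3: "(\<alpha>^2 + \<beta>^2) * (\<alpha>^2 + \<gamma>^2) = A^2 + W"
    using assms(1) by (simp_all add: quartic_splits_def)
  define S where "S = (\<beta> + \<gamma>)^2"
  define M where "M = \<alpha>^2 + \<beta> * \<gamma>"
  define D where "D = - (A + M)"
  define P where "P = \<alpha>^2 * (\<beta> - \<gamma>)^2"
  assume "\<not> 4 * V \<le> (\<beta> + \<gamma>)^2"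
  moreover have V: "4 * V = S + 2 * D"
    using E1 by (simp add: S_def D_def M_def power2_eq_square algebra_simps)
  ultimately have "0 < D"
    by (simp add: S_def)
  have M: "0 \<le> M" "\<alpha>^2 \<le> M"
    using \<open>0 \<le> \<beta>\<close> \<open>0 \<le> \<gamma>\<close> by (simp_all add: M_def)
  have "(\<beta> - \<gamma>)^2 \<le> (\<beta> + \<gamma>)^2"
    using \<open>0 \<le> \<beta>\<close> \<open>0 \<le> \<gamma>\<close> by (simp add: power2_eq_square algebra_simps)
  then have "P \<le> \<alpha>^2 * S"
    by (simp add: P_def S_def mult_left_mono)
  also have "\<dots> \<le> M * S"
    using M by (simp add: S_def mult_right_mono)
  finally have "(P - 2 * D * M - D^2) * (S + 2 * D) < P * S"
    using \<open>0 < D\<close> M by (intro shifted_product_less) (simp_all add: S_def)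
  also have "P * S = 4 * K^2"
    using arg_cong[OF E2, of "\<lambda>x. x^2"] by (simp add: P_def S_def power2_eq_square algebra_simps)
  also have "\<dots> \<le> W * (4 * V)"
    using CS by simp
  also have "W = P - 2 * D * M - D^2"
    using E3 by (simp add: P_def D_def M_def power2_eq_square algebra_simps)
  finally show False
    by (simp add: V)
qed

lemma quartic_two_quadratics_product:
  fixes s :: "'a::{comm_ring_1, real_algebra_1}"
  shows "((s - of_real \<alpha>)^2 + of_real \<beta>^2) * ((s + of_real \<alpha>)^2 + of_real \<gamma>^2)
    = s^4 + of_real (\<beta>^2 + \<gamma>^2 - 2 * \<alpha>^2) * s^2 + 2 * of_real (\<alpha> * (\<beta>^2 - \<gamma>^2)) * s
      + of_real ((\<alpha>^2 + \<beta>^2) * (\<alpha>^2 + \<gamma>^2))"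
  by (simp add: power2_eq_square power4_eq_xxxx algebra_simps)

section \<open>Convex hulls\<close>

lemma convex_hull_symmetric_pair:
  fixes p u :: "'a::real_vector"
  assumes "p + b *\<^sub>R u \<in> S" "p - b *\<^sub>R u \<in> S" "\<bar>t\<bar> \<le> b"
  shows "p + t *\<^sub>R u \<in> convex hull S"
proof -
  have "p + t *\<^sub>R u \<in> closed_segment (p - b *\<^sub>R u) (p + b *\<^sub>R u)"
  proof (cases "b = 0")
    case True
    then show ?thesis
      using assms(3) by simp
  next
    case False
    with assms(3) have "0 < b"
      by simp
    define \<theta> where "\<theta> = (b + t) / (2 * b)"
    have "(1 - \<theta>) *\<^sub>R (p - b *\<^sub>R u) + \<theta> *\<^sub>R (p + b *\<^sub>R u)
        = p + (\<theta> * b) *\<^sub>R u - ((1 - \<theta>) * b) *\<^sub>R u"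
      by (simp add: algebra_simps)
    also have "\<dots> = p + (\<theta> * b - (1 - \<theta>) * b) *\<^sub>R u"
      by (simp add: scaleR_left_diff_distrib add_diff_eq)
    also have "\<theta> * b - (1 - \<theta>) * b = t"
      using \<open>0 < b\<close> by (simp add: \<theta>_def field_simps)
    moreover have "0 \<le> \<theta>" "\<theta> \<le> 1"
      using \<open>0 < b\<close> assms(3) by (auto simp: \<theta>_def field_simps)
    ultimately show ?thesis
      unfolding in_segment by metis
  qed
  also have "\<dots> \<subseteq> convex hull S"
    using assms(1,2) by (intro closed_segment_subset_convex_hull hull_inc)
  finally show ?thesis .
qed

lemma convex_hull_two_symmetric_pairs:
  fixes x e u :: "'a::real_vector"
  assumes "x + e + \<beta> *\<^sub>R u \<in> S" "x + e - \<beta> *\<^sub>R u \<in> S"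
    and "x - e + \<gamma> *\<^sub>R u \<in> S" "x - e - \<gamma> *\<^sub>R u \<in> S"
    and "0 \<le> \<beta>" "0 \<le> \<gamma>" "0 \<le> t" "2 * t \<le> \<beta> + \<gamma>"
  shows "x + t *\<^sub>R u \<in> convex hull S"
proof -
  define t' where "t' = min \<beta> (2 * t)"
  have "x + e + t' *\<^sub>R u \<in> convex hull S" "x - e + (2 * t - t') *\<^sub>R u \<in> convex hull S"
    using assms by (auto simp: t'_def intro!: convex_hull_symmetric_pair)
  then have "midpoint (x + e + t' *\<^sub>R u) (x - e + (2 * t - t') *\<^sub>R u) \<in> convex hull S"
    by (rule midpoints_in_convex_hull)
  moreover have "x + e + t' *\<^sub>R u + (x - e + (2 * t - t') *\<^sub>R u) = 2 *\<^sub>R (x + t *\<^sub>R u)"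
    by (simp add: algebra_simps scaleR_2)
  ultimately show ?thesis
    by (simp add: midpoint_def)
qed

section \<open>The critical point\<close>

lemma imag_unit_direction:
  assumes "inner v oone = 0"
  obtains u where "imag_unit u" "v = norm v *\<^sub>R u"
proof (cases "v = 0")
  case True
  show ?thesis
  proof (rule that)
    show "imag_unit (((0, 1), (0, 0)), ((0, 0), (0, 0)))"
      by (simp add: imag_unit_def oone_def inner_prod_def)
  qed (simp add: True zero_prod_def)
next
  case False
  then show ?thesis
    using that[of "sgn v"] assms
    by (simp add: imag_unit_def sgn_div_norm power2_norm_eq_inner [symmetric] norm_sgn)
qed

text \<open>For \<open>z = m + v\<close> and \<open>c = A + m\<^sup>2 + w + 2 m v\<close> with \<open>v, w\<close> imaginary, this is
  \<open>C\<^sub>g(m + s) = (s\<^sup>2 + A)\<^sup>2 + |w - 2 s v|\<^sup>2\<close> evaluated on the complex plane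
  spanned by \<open>1\<close> and \<open>u\<close>.\<close>

lemma companion_monic_complex_embed:
  assumes u: "imag_unit u" and v: "inner v oone = 0" and w: "inner w oone = 0"
  shows "opoly_eval (companion [(A + m^2) *\<^sub>R oone + w + (2 * m) *\<^sub>R v,
             (-2) *\<^sub>R (m *\<^sub>R oone + v), oone]) (complex_embed u (of_real m + s))
       = complex_embed u (s^4 + of_real (2 * A + 4 * inner v v) * s^2 - 4 * of_real (inner w v) * s
           + of_real (A^2 + inner w w))"
proof -
  define c where "c = (A + m^2) *\<^sub>R oone + w + (2 * m) *\<^sub>R v"
  define z where "z = m *\<^sub>R oone + v"
  have "inner oone v = 0" "inner oone w = 0" "inner v w = inner w v"
    using v w by (simp_all add: inner_commute)
  note orth = this v w
  have zo: "inner z oone = m" and zz: "inner z z = m^2 + inner v v"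
    using orth by (simp_all add: z_def inner_add_left inner_add_right power2_eq_square)
  have co: "inner c oone = A + m^2"
    using orth by (simp add: c_def inner_add_left)
  have cz: "inner c z = (A + m^2) * m + inner w v + 2 * m * inner v v"
    using orth by (simp add: c_def z_def inner_add_left inner_add_right algebra_simps)
  have cc: "inner c c = (A + m^2)^2 + inner w w + 4 * m * inner w v + 4 * m^2 * inner v v"
    using orth by (simp add: c_def inner_add_left inner_add_right power2_eq_square algebra_simps)
  define C where "C = [inner c c, - 4 * inner c z, 4 * inner z z + 2 * inner c oone, - 4 * inner z oone, 1]"
  have "companion [c, (-2) *\<^sub>R z, oone] = map (\<lambda>t. t *\<^sub>R oone) C"
    by (simp add: C_def companion_quadratic)
  then have "opoly_eval (companion [c, (-2) *\<^sub>R z, oone]) (complex_embed u (of_real m + s))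
      = complex_embed u (\<Sum>k<length C. of_real (C ! k) * (of_real m + s)^k)"
    by (simp only: opoly_eval_real_coeffs[OF u])
  also have "(\<Sum>k<length C. of_real (C ! k) * (of_real m + s)^k)
      = s^4 + of_real (2 * A + 4 * inner v v) * s^2 - 4 * of_real (inner w v) * s + of_real (A^2 + inner w w)"
    by (simp add: C_def zo zz co cz cc numeral_eq_Suc lessThan_Suc
        power2_eq_square power3_eq_cube power4_eq_xxxx algebra_simps)
  finally show ?thesis
    by (simp only: c_def z_def)
qed

lemma companion_monic_roots:
  fixes m A :: real
  assumes u: "imag_unit u" and v: "inner v oone = 0" and w: "inner w oone = 0"
    and S: "quartic_splits A (inner v v) (inner w v) (inner w w) \<alpha> \<beta> \<gamma>"
  defines "R \<equiv> {r. opoly_eval (companion [(A + m^2) *\<^sub>R oone + w + (2 * m) *\<^sub>R v,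
    (-2) *\<^sub>R (m *\<^sub>R oone + v), oone]) r = 0}"
  shows "m *\<^sub>R oone + \<alpha> *\<^sub>R oone + \<beta> *\<^sub>R u \<in> R"
    and "m *\<^sub>R oone - \<alpha> *\<^sub>R oone + \<gamma> *\<^sub>R u \<in> R"
proof -
  have eval: "opoly_eval (companion [(A + m^2) *\<^sub>R oone + w + (2 * m) *\<^sub>R v,
      (-2) *\<^sub>R (m *\<^sub>R oone + v), oone]) (complex_embed u (of_real m + s))
    = complex_embed u (((s - of_real \<alpha>)^2 + of_real \<beta>^2) * ((s + of_real \<alpha>)^2 + of_real \<gamma>^2))" for s
    using S unfolding companion_monic_complex_embed[OF u v w] quartic_two_quadratics_product
    by (simp add: quartic_splits_def)
  have "complex_embed u (of_real m + (of_real \<alpha> + \<i> * of_real \<beta>))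
      = m *\<^sub>R oone + \<alpha> *\<^sub>R oone + \<beta> *\<^sub>R u"
    and "complex_embed u (of_real m + (- of_real \<alpha> + \<i> * of_real \<gamma>))
      = m *\<^sub>R oone - \<alpha> *\<^sub>R oone + \<gamma> *\<^sub>R u"
    by (simp_all add: complex_embed_def scaleR_add_left scaleR_diff_left)
  moreover have "((of_real \<alpha> + \<i> * of_real \<beta>) - of_real \<alpha>)^2 + of_real \<beta>^2 = (0 :: complex)"
    and "((- of_real \<alpha> + \<i> * of_real \<gamma>) + of_real \<alpha>)^2 + of_real \<gamma>^2 = (0 :: complex)"
    by (simp_all add: power_mult_distrib)
  moreover have "complex_embed u 0 = 0"
    by (simp add: complex_embed_def)
  ultimately show "m *\<^sub>R oone + \<alpha> *\<^sub>R oone + \<beta> *\<^sub>R u \<in> R"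
    "m *\<^sub>R oone - \<alpha> *\<^sub>R oone + \<gamma> *\<^sub>R u \<in> R"
    using eval[of "of_real \<alpha> + \<i> * of_real \<beta>"] eval[of "- of_real \<alpha> + \<i> * of_real \<gamma>"]
    by (simp_all add: R_def)
qed

lemma critical_point_in_convex_hull_companion_roots:
  "z \<in> convex hull {r. opoly_eval (companion [c, (-2) *\<^sub>R z, oone]) r = 0}"
proof -
  define m where "m = inner z oone"
  define v where "v = z - m *\<^sub>R oone"
  define A where "A = inner c oone - m^2"
  define w where "w = c - (A + m^2) *\<^sub>R oone - (2 * m) *\<^sub>R v"
  have v: "inner v oone = 0" and w: "inner w oone = 0"
    by (simp_all add: v_def w_def A_def m_def inner_diff_left)
  have z: "z = m *\<^sub>R oone + v" and c: "c = (A + m^2) *\<^sub>R oone + w + (2 * m) *\<^sub>R v"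
    by (simp_all add: v_def w_def)
  have CS: "(inner w v)^2 \<le> inner w w * inner v v"
    by (rule Cauchy_Schwarz_ineq)
  then obtain \<alpha> \<beta> \<gamma> where S: "quartic_splits A (inner v v) (inner w v) (inner w w) \<alpha> \<beta> \<gamma>"
    by (rule nonneg_quartic_splits[OF inner_ge_zero inner_ge_zero])
  then have "(2 * norm v)^2 \<le> (\<beta> + \<gamma>)^2" and "0 \<le> \<beta>" "0 \<le> \<gamma>"
    using quartic_splits_radii_bound[OF S CS]
    by (simp_all add: quartic_splits_def power_mult_distrib power2_norm_eq_inner)
  then have radius: "2 * norm v \<le> \<beta> + \<gamma>"
    by (metis power2_le_imp_le add_nonneg_nonneg)
  obtain u where u: "imag_unit u" and v_eq: "v = norm v *\<^sub>R u"
    using imag_unit_direction[OF v] .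
  have "m *\<^sub>R oone + norm v *\<^sub>R u \<in> convex hull {r. opoly_eval (companion
      [(A + m^2) *\<^sub>R oone + w + (2 * m) *\<^sub>R v, (-2) *\<^sub>R (m *\<^sub>R oone + v), oone]) r = 0}"
    using companion_monic_roots[OF u v w S] companion_monic_roots[OF imag_unit_uminus[OF u] v w S]
      \<open>0 \<le> \<beta>\<close> \<open>0 \<le> \<gamma>\<close> radius
    by (intro convex_hull_two_symmetric_pairs[where e = "\<alpha> *\<^sub>R oone"]) auto
  then show ?thesis
    by (simp only: flip: v_eq z c)
qed

theorem theorem4p3:
  fixes a0 a1 a2 :: octonion
  assumes "a2 \<noteq> 0"
  shows "{z. opoly_eval (opoly_deriv [a0, a1, a2]) z = 0}
           \<subseteq> convex hull {r. opoly_eval (companion [a0, a1, a2]) r = 0}"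
proof
  fix z
  assume "z \<in> {z. opoly_eval (opoly_deriv [a0, a1, a2]) z = 0}"
  then have "a1 = - (2 *\<^sub>R omult a2 z)"
    by (simp add: opoly_eval_deriv_quadratic eq_neg_iff_add_eq_0)
  then have a1: "a1 = omult a2 ((-2) *\<^sub>R z)"
    using omult_scaleR_right[of a2 "-2" z] by simp
  define c where "c = (1 / inner a2 a2) *\<^sub>R omult (ocnj a2) a0"
  have a0: "a0 = omult a2 c"
    using assms by (simp add: c_def omult_left_inverse)
  have "companion [a0, a1, a2] = map (scaleR (inner a2 a2)) (companion [c, (-2) *\<^sub>R z, oone])"
    by (simp add: a0 a1 flip: companion_omult_left)
  then have "{r. opoly_eval (companion [a0, a1, a2]) r = 0}
      = {r. opoly_eval (companion [c, (-2) *\<^sub>R z, oone]) r = 0}"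
    using assms by (simp add: opoly_eval_scaleR)
  then show "z \<in> convex hull {r. opoly_eval (companion [a0, a1, a2]) r = 0}"
    using critical_point_in_convex_hull_companion_roots by simp
qed

end
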